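(* Let $S=K[x_0,x_1,x_2]$. For every integer $1\le d\le 6$, every saturated Borel ideal $I\subset S$ with Hilbert polynomial $p_{S/I}(z)=d$ is a hilb-segment ideal with respect to some term order. For every integer $d\ge7$ there exists a saturated Borel ideal $I\subset S$ with Hilbert polynomial $p_{S/I}(z)=d$ which is not a hilb-segment ideal with respect to any term order.
   Context: $K$ algebraically closed of characteristic $0$, standard grading, $x_0<x_1<x_2$; $\mathbb T_t$ is the set of terms of degree $t$. A monomial ideal is Borel if $x^\alpha\in I$, $\alpha_j>0$, $j<2$ imply $x^\alpha x_{j+1}/x_j\in I$. Given a term order $\preceq$, $B\subseteq\mathbb T_t$ is a segment if $\tau\in B$, $\tau'\in\mathbb T_t$, $\tau'\succ\tau$ imply $\tau'\in B$. A nonzero saturated Borel ideal $I$ is a hilb-segment ideal w.r.t. $\preceq$ if $I\cap\mathbb T_r$ is a segment, where $r$ is the Gotzmann number of the Hilbert polynomial of $S/I$; for a constant Hilbert polynomial $d$ the Gotzmann number is $d$. *)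

theory Defs
  imports Main
begin

text \<open>Terms (monomials) of S = K[x0,x1,x2] are represented by their exponent
vectors (a,b,c), standing for x0^a x1^b x2^c.  A monomial ideal of S is
represented by the set of terms it contains (which determines it).\<close>

type_synonym term3 = "nat \<times> nat \<times> nat"

definition tdeg :: "term3 \<Rightarrow> nat" where
  "tdeg \<alpha> = (case \<alpha> of (a, b, c) \<Rightarrow> a + b + c)"

definition tmul :: "term3 \<Rightarrow> term3 \<Rightarrow> term3" where
  "tmul \<alpha> \<beta> = (case \<alpha> of (a, b, c) \<Rightarrow> case \<beta> of (a', b', c') \<Rightarrow> (a + a', b + b', c + c'))"

definition Tdeg :: "nat \<Rightarrow> term3 set" where
  "Tdeg t = {\<alpha>. tdeg \<alpha> = t}"

definition monomial_ideal :: "term3 set \<Rightarrow> bool" where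
  "monomial_ideal I \<longleftrightarrow> (\<forall>\<alpha>\<in>I. \<forall>\<beta>. tmul \<alpha> \<beta> \<in> I)"

definition borel :: "term3 set \<Rightarrow> bool" where
  "borel I \<longleftrightarrow> monomial_ideal I \<and>
     (\<forall>a b c. (a, b, c) \<in> I \<longrightarrow>
        (0 < a \<longrightarrow> (a - 1, b + 1, c) \<in> I) \<and> (0 < b \<longrightarrow> (a, b - 1, c + 1) \<in> I))"

text \<open>Saturation w.r.t. the irrelevant maximal ideal m=(x0,x1,x2): I : m^\<infinity> = I.
For a monomial ideal, x^\<alpha> \<in> I : m^k iff x^\<alpha> x^\<beta> \<in> I for all terms x^\<beta> of degree k.\<close>
definition saturated :: "term3 set \<Rightarrow> bool" where
  "saturated I \<longleftrightarrow> (\<forall>\<alpha>. (\<exists>k. \<forall>\<beta>. tdeg \<beta> = k \<longrightarrow> tmul \<alpha> \<beta> \<in> I) \<longrightarrow> \<alpha> \<in> I)"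

definition hilb_fun :: "term3 set \<Rightarrow> nat \<Rightarrow> nat" where
  "hilb_fun I t = card {\<alpha>. tdeg \<alpha> = t \<and> \<alpha> \<notin> I}"

text \<open>The Hilbert polynomial of S/I is the constant d: the Hilbert function equals d
for all sufficiently large t.\<close>
definition hilb_poly_const :: "term3 set \<Rightarrow> nat \<Rightarrow> bool" where
  "hilb_poly_const I d \<longleftrightarrow> (\<exists>t0. \<forall>t\<ge>t0. hilb_fun I t = d)"

definition term_order :: "(term3 \<Rightarrow> term3 \<Rightarrow> bool) \<Rightarrow> bool" where
  "term_order le \<longleftrightarrow>
     (\<forall>\<alpha>. le \<alpha> \<alpha>) \<and>
     (\<forall>\<alpha> \<beta>. le \<alpha> \<beta> \<and> le \<beta> \<alpha> \<longrightarrow> \<alpha> = \<beta>) \<and>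
     (\<forall>\<alpha> \<beta> \<gamma>. le \<alpha> \<beta> \<and> le \<beta> \<gamma> \<longrightarrow> le \<alpha> \<gamma>) \<and>
     (\<forall>\<alpha> \<beta>. le \<alpha> \<beta> \<or> le \<beta> \<alpha>) \<and>
     (\<forall>\<alpha>. le (0, 0, 0) \<alpha>) \<and>
     (\<forall>\<alpha> \<beta> \<gamma>. le \<alpha> \<beta> \<longrightarrow> le (tmul \<alpha> \<gamma>) (tmul \<beta> \<gamma>))"

definition segment :: "(term3 \<Rightarrow> term3 \<Rightarrow> bool) \<Rightarrow> nat \<Rightarrow> term3 set \<Rightarrow> bool" where
  "segment le t B \<longleftrightarrow> B \<subseteq> Tdeg t \<and>
     (\<forall>\<tau>\<in>B. \<forall>\<tau>'\<in>Tdeg t. le \<tau> \<tau>' \<and> \<tau>' \<noteq> \<tau> \<longrightarrow> \<tau>' \<in> B)"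

text \<open>Hilb-segment ideal for constant Hilbert polynomial d (Gotzmann number r = d):
a nonzero saturated Borel ideal I with I \<inter> T_d a segment.\<close>
definition hilb_segment_const :: "(term3 \<Rightarrow> term3 \<Rightarrow> bool) \<Rightarrow> nat \<Rightarrow> term3 set \<Rightarrow> bool" where
  "hilb_segment_const le d I \<longleftrightarrow>
     I \<noteq> {} \<and> saturated I \<and> borel I \<and> segment le d (I \<inter> Tdeg d)"

end

theory Submission
  imports Defs
begin

(* A saturated Borel ideal I does not depend on the exponent of x0, and Borel moves make
   each row {x1^b x2^c : b \<ge> 0} of I an up-set; hence I is a staircase
       I = {x0^a x1^b x2^c : L c \<le> b}
   for a function L that is strictly decreasing as long as it is positive.  The Hilbert
   function of S/I counts the standard terms, so in large degree it equals \<Sum>c L c;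
   a constant Hilbert polynomial d therefore bounds all partial sums of L by d.

   For d \<le> 6 this forces L to have at most three nonzero values, leaving thirteen
   staircases; for each an explicit weight order (weights (0,w1,w2), refined
   lexicographically) puts every standard term of degree d below every term of I.

   For d \<ge> 7 the staircases (4,3,0) (d = 7) and (d-3,2,1) (d \<ge> 8) contain two terms of
   degree d whose product is also a product of two standard terms of degree d.  Such a
   coincidence is impossible if I \<inter> T_d is a segment for a term order, which gives the
   counterexamples. *)

lemma tmul_commute: "tmul \<alpha> \<beta> = tmul \<beta> \<alpha>"
  unfolding tmul_def by (auto split: prod.splits)

lemma tmul_cancel: "tmul \<alpha> \<gamma> = tmul \<beta> \<gamma> \<Longrightarrow> \<alpha> = \<beta>"
  unfolding tmul_def by (auto split: prod.splits)

lemma monomial_ideal_shift: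
  "monomial_ideal I \<Longrightarrow> (a, b, c) \<in> I \<Longrightarrow> (a + p, b + q, c + r) \<in> I"
  unfolding monomial_ideal_def tmul_def by (metis case_prod_conv)

lemma borel_move01:
  assumes "borel I" "(a, b, c) \<in> I" "i \<le> a"
  shows "(a - i, b + i, c) \<in> I"
  using assms(3)
proof (induction i)
  case 0
  then show ?case using assms(2) by simp
next
  case (Suc i)
  then have "(a - i, b + i, c) \<in> I" "0 < a - i" by auto
  then have "(a - i - 1, b + i + 1, c) \<in> I" using assms(1) unfolding borel_def by blast
  then show ?case by (simp add: diff_Suc)
qed

lemma borel_move12:
  assumes "borel I" "(a, b, c) \<in> I" "j \<le> b"
  shows "(a, b - j, c + j) \<in> I"
  using assms(3)
proof (induction j)
  case 0
  then show ?case using assms(2) by simp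
next
  case (Suc j)
  then have "(a, b - j, c + j) \<in> I" "0 < b - j" by auto
  then have "(a, b - j - 1, c + j + 1) \<in> I" using assms(1) unfolding borel_def by blast
  then show ?case by (simp add: diff_Suc)
qed

text \<open>If x0^a x1^b x2^c lies in I, Borel moves put x1^b x2^c times every term of degree a
  into I, so saturation gives x1^b x2^c \<in> I.\<close>
lemma saturated_borel_x0_free:
  assumes bo: "borel I" and sat: "saturated I"
  shows "(a, b, c) \<in> I \<longleftrightarrow> (0, b, c) \<in> I"
proof
  assume "(0, b, c) \<in> I"
  then show "(a, b, c) \<in> I"
    using monomial_ideal_shift[of I 0 b c a 0 0] bo unfolding borel_def by simp
next
  assume abc: "(a, b, c) \<in> I"
  have "tmul (0, b, c) \<beta> \<in> I" if "tdeg \<beta> = a" for \<beta>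
  proof -
    obtain p q r where \<beta>: "\<beta> = (p, q, r)" by (cases \<beta>)
    with that have deg: "p + q + r = a" by (simp add: tdeg_def)
    have "(a - (q + r), b + (q + r), c) \<in> I"
      by (rule borel_move01[OF bo abc]) (use deg in simp)
    moreover have "a - (q + r) = p" using deg by simp
    ultimately have "(p, b + q + r, c) \<in> I" by (simp add: add.assoc)
    from borel_move12[OF bo this, of r] have "(p, b + q, c + r) \<in> I" by simp
    then show ?thesis using \<beta> by (simp add: tmul_def add.commute)
  qed
  then show "(0, b, c) \<in> I" using sat unfolding saturated_def by blast
qed

lemma hilb_fun_x0_free:
  assumes "\<And>a b c. (a, b, c) \<in> I \<longleftrightarrow> (0, b, c) \<in> I"
  shows "hilb_fun I t = card {(b, c). b + c \<le> t \<and> (0, b, c) \<notin> I}"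
proof -
  have "bij_betw (\<lambda>(a, b, c). (b, c)) {\<alpha>. tdeg \<alpha> = t \<and> \<alpha> \<notin> I}
          {(b, c). b + c \<le> t \<and> (0, b, c) \<notin> I}"
    by (rule bij_betw_byWitness[where f' = "\<lambda>(b, c). (t - b - c, b, c)"])
       (use assms in \<open>auto simp: tdeg_def; metis\<close>)+
  then show ?thesis unfolding hilb_fun_def by (rule bij_betw_same_card)
qed

lemma finite_pairs_below: "finite {(b, c). b + c \<le> (t::nat) \<and> P b c}"
  by (rule finite_subset[of _ "{..t} \<times> {..t}"]) auto

text \<open>A constant Hilbert polynomial forces every row of I to be nonempty: an empty row
  would contribute d + 1 standard terms in large degree.\<close>
lemma rows_nonempty:
  assumes bo: "borel I" and sat: "saturated I" and hp: "hilb_poly_const I d"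
  shows "\<exists>b. (0, b, c) \<in> I"
proof (rule ccontr)
  assume empty: "\<not> (\<exists>b. (0, b, c) \<in> I)"
  obtain t0 where t0: "\<And>t. t0 \<le> t \<Longrightarrow> hilb_fun I t = d"
    using hp unfolding hilb_poly_const_def by blast
  define t where "t = t0 + d + c"
  have "(\<lambda>b. (b, c)) ` {..d} \<subseteq> {(b, c). b + c \<le> t \<and> (0, b, c) \<notin> I}"
    using empty unfolding t_def by auto
  then have "card ((\<lambda>b. (b, c)) ` {..d}) \<le> card {(b, c). b + c \<le> t \<and> (0, b, c) \<notin> I}"
    by (rule card_mono[OF finite_pairs_below])
  also have "\<dots> = hilb_fun I t"
    by (rule hilb_fun_x0_free[symmetric]) (rule saturated_borel_x0_free[OF bo sat])
  also have "\<dots> = d" using t0 unfolding t_def by simp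
  finally show False by (simp add: card_image inj_on_def)
qed

section \<open>Staircase ideals\<close>

definition staircase :: "(nat \<Rightarrow> nat) \<Rightarrow> term3 set" where
  "staircase L = {(a, b, c). L c \<le> b}"

lemma staircase_mem [simp]: "(a, b, c) \<in> staircase L \<longleftrightarrow> L c \<le> b"
  unfolding staircase_def by simp

text \<open>The Borel condition on a staircase: row starts decrease strictly until they reach 0.\<close>
definition stair_decreasing :: "(nat \<Rightarrow> nat) \<Rightarrow> bool" where
  "stair_decreasing L \<longleftrightarrow> (\<forall>c. 0 < L (Suc c) \<longrightarrow> L (Suc c) < L c)"

lemma stair_decreasing_antimono:
  assumes "stair_decreasing L" "c \<le> c'"
  shows "L c' \<le> L c"
proof (rule lift_Suc_antimono_le[OF _ assms(2)])
  show "L (Suc n) \<le> L n" for n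
    using assms(1) unfolding stair_decreasing_def by (metis less_imp_le_nat neq0_conv zero_le)
qed

lemma staircase_borel:
  assumes dec: "stair_decreasing L"
  shows "borel (staircase L)"
  unfolding borel_def monomial_ideal_def
proof (intro conjI allI impI ballI)
  fix \<alpha> \<beta> :: term3 assume "\<alpha> \<in> staircase L"
  moreover obtain a b c a' b' c' where "\<alpha> = (a, b, c)" "\<beta> = (a', b', c')" by (cases \<alpha>, cases \<beta>)
  moreover have "L (c + c') \<le> L c" by (rule stair_decreasing_antimono[OF dec]) simp
  ultimately show "tmul \<alpha> \<beta> \<in> staircase L" by (simp add: tmul_def)
next
  fix a b c assume "(a, b, c) \<in> staircase L"
  then show "(a - 1, b + 1, c) \<in> staircase L" by simp
  assume "0 < b"
  moreover have "0 < L (Suc c) \<Longrightarrow> L (Suc c) < L c" using dec unfolding stair_decreasing_def by blast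
  ultimately show "(a, b - 1, c + 1) \<in> staircase L" using \<open>(a, b, c) \<in> staircase L\<close> by fastforce
qed

lemma staircase_saturated: "saturated (staircase L)"
  unfolding saturated_def
proof (intro allI impI)
  fix \<alpha> assume "\<exists>k. \<forall>\<beta>. tdeg \<beta> = k \<longrightarrow> tmul \<alpha> \<beta> \<in> staircase L"
  then obtain k where "\<forall>\<beta>. tdeg \<beta> = k \<longrightarrow> tmul \<alpha> \<beta> \<in> staircase L" by blast
  then have "tmul \<alpha> (k, 0, 0) \<in> staircase L" by (simp add: tdeg_def)
  then show "\<alpha> \<in> staircase L" by (cases \<alpha>) (simp add: tmul_def)
qed

lemma staircase_nonempty: "staircase L \<noteq> {}"
  using staircase_mem[of 0 "L 0" 0 L] by blast

definition row_start :: "term3 set \<Rightarrow> nat \<Rightarrow> nat" where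
  "row_start I c = (LEAST b. (0, b, c) \<in> I)"

lemma saturated_borel_staircase:
  assumes bo: "borel I" and sat: "saturated I" and rows: "\<And>c. \<exists>b. (0, b, c) \<in> I"
  shows "I = staircase (row_start I)" and "stair_decreasing (row_start I)"
proof -
  let ?L = "row_start I"
  have row: "(0, b, c) \<in> I \<longleftrightarrow> ?L c \<le> b" for b c
  proof
    assume "(0, b, c) \<in> I"
    then show "?L c \<le> b" unfolding row_start_def by (rule Least_le)
  next
    assume le: "?L c \<le> b"
    have "(0, ?L c, c) \<in> I" unfolding row_start_def using rows by (rule LeastI_ex)
    from monomial_ideal_shift[OF _ this, of 0 "b - ?L c" 0] show "(0, b, c) \<in> I"
      using bo le unfolding borel_def by simp
  qed
  show "I = staircase ?L"
  proof (rule set_eqI)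
    fix \<alpha> :: term3
    obtain a b c where "\<alpha> = (a, b, c)" by (cases \<alpha>)
    then show "\<alpha> \<in> I \<longleftrightarrow> \<alpha> \<in> staircase ?L"
      using saturated_borel_x0_free[OF bo sat] row by simp
  qed
  text \<open>x1^(L(c+1) - 1) x2^(c+1) \<notin> I, so by Borel x1^(L(c+1)) x2^c \<notin> I.\<close>
  have "?L (Suc c) < ?L c" if pos: "0 < ?L (Suc c)" for c
  proof -
    have "(0, ?L (Suc c) - 1, Suc c) \<notin> I" using row pos by simp
    moreover have "(0, ?L (Suc c) - 1, c + 1) \<in> I" if "(0, ?L (Suc c), c) \<in> I"
      using bo pos that unfolding borel_def by blast
    ultimately have "(0, ?L (Suc c), c) \<notin> I" by auto
    then show ?thesis using row by simp
  qed
  then show "stair_decreasing ?L" unfolding stair_decreasing_def by blast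
qed

lemma constant_hilb_poly_staircase:
  assumes "borel I" "saturated I" "hilb_poly_const I d"
  obtains L where "stair_decreasing L" "I = staircase L"
  using saturated_borel_staircase[OF assms(1,2) rows_nonempty[OF assms]] by blast

lemma staircase_hilb_fun: "hilb_fun (staircase L) t = card {(b, c). b + c \<le> t \<and> b < L c}"
  by (subst hilb_fun_x0_free) (auto simp: not_le)

lemma card_rows_block:
  fixes L :: "nat \<Rightarrow> nat"
  shows "card {(b, c). c < n \<and> b < L c} = (\<Sum>c<n. L c)"
proof -
  have "{(b, c). c < n \<and> b < L c} = (\<lambda>(c, b). (b, c)) ` (SIGMA c:{..<n}. {..<L c})"
    by auto
  moreover have "inj_on (\<lambda>(c, b). (b, c)) (SIGMA c:{..<n}. {..<L c})"
    by (auto simp: inj_on_def)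
  ultimately have "card {(b, c). c < n \<and> b < L c} = card (SIGMA c:{..<n}. {..<L c})"
    by (simp add: card_image)
  also have "\<dots> = (\<Sum>c<n. card {..<L c})" by (intro card_SigmaI) simp_all
  finally show ?thesis by simp
qed

lemma rows_block_below:
  assumes "stair_decreasing L" "L 0 + n \<le> t"
  shows "{(b, c). c < n \<and> b < L c} \<subseteq> {(b, c). b + c \<le> t \<and> b < L c}"
proof safe
  fix b c assume "c < n" "b < L c"
  moreover have "L c \<le> L 0" by (rule stair_decreasing_antimono[OF assms(1)]) simp
  ultimately show "b + c \<le> t" using assms(2) by linarith
qed

lemma staircase_hilb_poly_const:
  assumes dec: "stair_decreasing L" and vanish: "\<And>c. n \<le> c \<Longrightarrow> L c = 0"
  shows "hilb_poly_const (staircase L) (\<Sum>c<n. L c)"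
  unfolding hilb_poly_const_def
proof (intro exI allI impI)
  fix t assume "L 0 + n \<le> t"
  with rows_block_below[OF dec] vanish
  have "{(b, c). b + c \<le> t \<and> b < L c} = {(b, c). c < n \<and> b < L c}"
    by (fastforce simp: not_less[symmetric])
  then show "hilb_fun (staircase L) t = (\<Sum>c<n. L c)"
    by (simp add: staircase_hilb_fun card_rows_block)
qed

lemma staircase_partial_sums_bounded:
  assumes dec: "stair_decreasing L" and hp: "hilb_poly_const (staircase L) d"
  shows "(\<Sum>c<n. L c) \<le> d"
proof -
  obtain t0 where t0: "\<And>t. t0 \<le> t \<Longrightarrow> hilb_fun (staircase L) t = d"
    using hp unfolding hilb_poly_const_def by blast
  define t where "t = t0 + L 0 + n"
  have "(\<Sum>c<n. L c) = card {(b, c). c < n \<and> b < L c}" by (rule card_rows_block[symmetric])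
  also have "\<dots> \<le> card {(b, c). b + c \<le> t \<and> b < L c}"
    by (rule card_mono[OF finite_pairs_below rows_block_below[OF dec]]) (simp add: t_def)
  also have "\<dots> = d" using t0 unfolding t_def by (simp add: staircase_hilb_fun)
  finally show ?thesis .
qed

lemma hilb_poly_const_unique:
  assumes "hilb_poly_const I d" "hilb_poly_const I d'"
  shows "d = d'"
proof -
  obtain t0 t1 where "\<And>t. t0 \<le> t \<Longrightarrow> hilb_fun I t = d" "\<And>t. t1 \<le> t \<Longrightarrow> hilb_fun I t = d'"
    using assms unfolding hilb_poly_const_def by blast
  then show ?thesis by (metis max.cobounded1 max.cobounded2)
qed

section \<open>Weight orders and segments\<close>

definition weight_order :: "nat \<Rightarrow> nat \<Rightarrow> term3 \<Rightarrow> term3 \<Rightarrow> bool" where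
  "weight_order w1 w2 \<alpha> \<beta> \<longleftrightarrow> (case \<alpha> of (a, b, c) \<Rightarrow> case \<beta> of (a', b', c') \<Rightarrow>
     w1 * b + w2 * c < w1 * b' + w2 * c' \<or>
     (w1 * b + w2 * c = w1 * b' + w2 * c' \<and> (a < a' \<or> (a = a' \<and> (b < b' \<or> (b = b' \<and> c \<le> c'))))))"

lemma weight_order_term_order: "term_order (weight_order w1 w2)"
  unfolding term_order_def weight_order_def tmul_def
  by (auto split: prod.splits simp: add_mult_distrib2)

definition weight_separates :: "(nat \<Rightarrow> nat) \<Rightarrow> nat \<Rightarrow> nat \<Rightarrow> bool" where
  "weight_separates L w1 w2 \<longleftrightarrow>
     (\<forall>b c b' c'. b < L c \<longrightarrow> L c' \<le> b' \<longrightarrow> w1 * b + w2 * c < w1 * b' + w2 * c')"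

lemma weight_separates_segment:
  assumes sep: "weight_separates L w1 w2"
  shows "segment (weight_order w1 w2) d (staircase L \<inter> Tdeg d)"
  unfolding segment_def
proof (intro conjI ballI impI)
  fix \<tau> \<tau>' assume \<tau>: "\<tau> \<in> staircase L \<inter> Tdeg d" and \<tau>': "\<tau>' \<in> Tdeg d"
    and above: "weight_order w1 w2 \<tau> \<tau>' \<and> \<tau>' \<noteq> \<tau>"
  obtain a b c where t: "\<tau> = (a, b, c)" by (cases \<tau>)
  obtain a' b' c' where t': "\<tau>' = (a', b', c')" by (cases \<tau>')
  have "w1 * b + w2 * c \<le> w1 * b' + w2 * c'"
    using above unfolding t t' weight_order_def by auto
  moreover have "L c \<le> b" using \<tau> t by simp
  ultimately have "L c' \<le> b'"
    using sep unfolding weight_separates_def by (meson leD not_le)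
  then show "\<tau>' \<in> staircase L \<inter> Tdeg d" using \<tau>' t' by simp
qed simp

section \<open>Positive part: d \<le> 6\<close>

definition rows3 :: "nat \<Rightarrow> nat \<Rightarrow> nat \<Rightarrow> nat \<Rightarrow> nat" where
  "rows3 x y z c = (if c = 0 then x else if c = 1 then y else if c = 2 then z else 0)"

lemma rows3_decreasing:
  "(0 < y \<longrightarrow> y < x) \<Longrightarrow> (0 < z \<longrightarrow> z < y) \<Longrightarrow> stair_decreasing (rows3 x y z)"
  unfolding stair_decreasing_def rows3_def by auto

lemma rows3_values [simp]:
  "rows3 x y z 0 = x" "rows3 x y z 1 = y" "rows3 x y z (Suc 0) = y" "rows3 x y z 2 = z"
  "3 \<le> c \<Longrightarrow> rows3 x y z c = 0"
  unfolding rows3_def by simp_all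

lemma rows3_sum: "(\<Sum>c<3. rows3 x y z c) = x + y + z"
  by (simp add: numeral_eq_Suc rows3_def)

lemma small_rows3_separable:
  assumes xyz: "0 < y \<longrightarrow> y < x" "0 < z \<longrightarrow> z < y" and d: "1 \<le> x + y + z" "x + y + z \<le> 6"
  shows "\<exists>w1 w2. weight_separates (rows3 x y z) w1 w2"
proof -
  have weights:
    "weight_separates (rows3 1 0 0) 1 1" "weight_separates (rows3 2 0 0) 1 2"
    "weight_separates (rows3 3 0 0) 1 3" "weight_separates (rows3 2 1 0) 1 1"
    "weight_separates (rows3 4 0 0) 1 4" "weight_separates (rows3 3 1 0) 1 2"
    "weight_separates (rows3 5 0 0) 1 5" "weight_separates (rows3 4 1 0) 1 3"
    "weight_separates (rows3 3 2 0) 2 3" "weight_separates (rows3 6 0 0) 1 6"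
    "weight_separates (rows3 5 1 0) 1 4" "weight_separates (rows3 4 2 0) 1 2"
    "weight_separates (rows3 3 2 1) 1 1"
    by (auto simp: weight_separates_def rows3_def split: if_splits)
  have "(x = 1 \<and> y = 0 \<and> z = 0) \<or> (x = 2 \<and> y = 0 \<and> z = 0) \<or> (x = 3 \<and> y = 0 \<and> z = 0) \<or>
    (x = 2 \<and> y = 1 \<and> z = 0) \<or> (x = 4 \<and> y = 0 \<and> z = 0) \<or> (x = 3 \<and> y = 1 \<and> z = 0) \<or>
    (x = 5 \<and> y = 0 \<and> z = 0) \<or> (x = 4 \<and> y = 1 \<and> z = 0) \<or> (x = 3 \<and> y = 2 \<and> z = 0) \<or>
    (x = 6 \<and> y = 0 \<and> z = 0) \<or> (x = 5 \<and> y = 1 \<and> z = 0) \<or> (x = 4 \<and> y = 2 \<and> z = 0) \<or>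
    (x = 3 \<and> y = 2 \<and> z = 1)"
    using xyz d by presburger
  then show ?thesis using weights by blast
qed

text \<open>For d \<le> 6 a staircase with Hilbert polynomial d has at most three nonzero rows:
  a fourth would force L 0 + L 1 + L 2 + L 3 \<ge> 4 + 3 + 2 + 1 > 6.\<close>
lemma small_staircase_rows3:
  assumes dec: "stair_decreasing L" and hp: "hilb_poly_const (staircase L) d" and d: "d \<le> 6"
  shows "L = rows3 (L 0) (L 1) (L 2)" and "L 0 + L 1 + L 2 = d"
    and "0 < L 1 \<longrightarrow> L 1 < L 0" and "0 < L 2 \<longrightarrow> L 2 < L 1"
proof -
  have step: "0 < L c' \<Longrightarrow> L c' < L c" if "c' = Suc c" for c c'
    using dec that unfolding stair_decreasing_def by blast
  then show "0 < L 1 \<longrightarrow> L 1 < L 0" "0 < L 2 \<longrightarrow> L 2 < L 1"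
    using step[of 1 0] step[of 2 1] by simp_all
  have "L 3 = 0"
  proof (rule ccontr)
    assume "L 3 \<noteq> 0"
    then have "L 3 < L 2" using step[of 3 2] by simp
    moreover from this have "L 2 < L 1" using step[of 2 1] by simp
    moreover from this have "L 1 < L 0" using step[of 1 0] by simp
    moreover have "(\<Sum>c<4. L c) \<le> d" by (rule staircase_partial_sums_bounded[OF dec hp])
    moreover have "(\<Sum>c<4. L c) = L 0 + L 1 + L 2 + L 3" by (simp add: numeral_eq_Suc)
    ultimately show False using d \<open>L 3 \<noteq> 0\<close> by linarith
  qed
  then have vanish: "L c = 0" if "3 \<le> c" for c
    using stair_decreasing_antimono[OF dec that] by simp
  then show "L = rows3 (L 0) (L 1) (L 2)"
    by (auto simp: rows3_def fun_eq_iff numeral_eq_Suc)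
  show "L 0 + L 1 + L 2 = d"
    using hilb_poly_const_unique[OF staircase_hilb_poly_const[of L 3, OF dec vanish] hp]
    by (simp add: numeral_eq_Suc)
qed

lemma positive_part:
  assumes bo: "borel I" and sat: "saturated I" and hp: "hilb_poly_const I d"
    and d: "1 \<le> d" "d \<le> 6"
  shows "\<exists>le. term_order le \<and> hilb_segment_const le d I"
proof -
  obtain L where dec: "stair_decreasing L" and I: "I = staircase L"
    using constant_hilb_poly_staircase[OF bo sat hp] .
  note rows = small_staircase_rows3[OF dec hp[unfolded I] d(2)]
  obtain w1 w2 where "weight_separates (rows3 (L 0) (L 1) (L 2)) w1 w2"
    using small_rows3_separable[OF rows(3,4)] rows(2) d by auto
  then have "segment (weight_order w1 w2) d (I \<inter> Tdeg d)"
    unfolding I by (subst rows(1)) (rule weight_separates_segment)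
  then have "hilb_segment_const (weight_order w1 w2) d I"
    unfolding hilb_segment_const_def using bo sat I staircase_nonempty by blast
  then show ?thesis using weight_order_term_order by blast
qed

section \<open>Negative part: d \<ge> 7\<close>

text \<open>If I \<inter> T_d is a segment, every standard term of degree d lies below every term of
  I \<inter> T_d, so t1 t2 < s1 t2 \<le> s1 s2 for standard t1, t2 and s1, s2 \<in> I: a product of two
  standard terms of degree d is never a product of two terms of I of degree d.\<close>
lemma segment_product_obstruction:
  assumes to: "term_order le" and seg: "segment le d (I \<inter> Tdeg d)"
    and t1: "t1 \<in> Tdeg d" "t1 \<notin> I" and t2: "t2 \<in> Tdeg d" "t2 \<notin> I"
    and s1: "s1 \<in> Tdeg d" "s1 \<in> I" and s2: "s2 \<in> Tdeg d" "s2 \<in> I"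
  shows "tmul t1 t2 \<noteq> tmul s1 s2"
proof
  assume eq: "tmul t1 t2 = tmul s1 s2"
  have below: "le t s" if "t \<in> Tdeg d" "t \<notin> I" "s \<in> Tdeg d" "s \<in> I" for t s
  proof (rule ccontr)
    assume "\<not> le t s"
    then have "le s t" using to unfolding term_order_def by blast
    then have "t \<in> I" using seg that unfolding segment_def by blast
    then show False using that by blast
  qed
  have mult: "le (tmul x z) (tmul y z)" if "le x y" for x y z
    using to that unfolding term_order_def by blast
  have "le (tmul t1 t2) (tmul s1 t2)" using mult below[OF t1 s1] .
  moreover have "le (tmul s1 t2) (tmul s1 s2)"
    using mult[OF below[OF t2 s2], of s1] by (simp add: tmul_commute)
  ultimately have "tmul t1 t2 = tmul s1 t2" using eq to unfolding term_order_def by metis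
  then show False using tmul_cancel t1 s1 by blast
qed

lemma obstructed_staircase:
  assumes dec: "stair_decreasing L" and vanish: "\<And>c. n \<le> c \<Longrightarrow> L c = 0"
    and d: "(\<Sum>c<n. L c) = d"
    and t1: "t1 \<in> Tdeg d" "t1 \<notin> staircase L" and t2: "t2 \<in> Tdeg d" "t2 \<notin> staircase L"
    and s1: "s1 \<in> Tdeg d" "s1 \<in> staircase L" and s2: "s2 \<in> Tdeg d" "s2 \<in> staircase L"
    and eq: "tmul t1 t2 = tmul s1 s2"
  shows "\<exists>I. borel I \<and> saturated I \<and> hilb_poly_const I d \<and>
           (\<forall>le. term_order le \<longrightarrow> \<not> hilb_segment_const le d I)"
proof (intro exI[of _ "staircase L"] conjI allI impI notI)
  show "borel (staircase L)" by (rule staircase_borel[OF dec])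
  show "saturated (staircase L)" by (rule staircase_saturated)
  show "hilb_poly_const (staircase L) d"
    using staircase_hilb_poly_const[of L n, OF dec vanish] unfolding d .
  fix le assume "term_order le" "hilb_segment_const le d (staircase L)"
  then have "tmul t1 t2 \<noteq> tmul s1 s2"
    using segment_product_obstruction[OF _ _ t1 t2 s1 s2] unfolding hilb_segment_const_def by blast
  then show False using eq by contradiction
qed

lemma negative_part:
  assumes "7 \<le> d"
  shows "\<exists>I. borel I \<and> saturated I \<and> hilb_poly_const I d \<and>
           (\<forall>le. term_order le \<longrightarrow> \<not> hilb_segment_const le d I)"
proof (cases "d = 7")
  case True
  text \<open>I = (x1^4, x1^3 x2, x2^2): (x0^4 x1^2 x2)^2 = (x0^3 x1^4)(x0^5 x2^2).\<close>
  show ?thesis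
    by (rule obstructed_staircase[of "rows3 4 3 0" 3 d "(4, 2, 1)" "(4, 2, 1)" "(3, 4, 0)" "(5, 0, 2)"])
       (use True in \<open>simp_all add: rows3_decreasing rows3_sum Tdeg_def tdeg_def tmul_def\<close>)
next
  case False
  then have d8: "8 \<le> d" using assms by simp
  text \<open>I = (x1^(d-3), x1^2 x2, x1 x2^2, x2^3):
    (x0^4 x1^(d-4)) (x0^(d-2) x2^2) = (x0^(d-3) x1^2 x2) (x0^5 x1^(d-6) x2).\<close>
  show ?thesis
    by (rule obstructed_staircase[of "rows3 (d - 3) 2 1" 3 d
          "(4, d - 4, 0)" "(d - 2, 0, 2)" "(d - 3, 2, 1)" "(5, d - 6, 1)"])
       (use d8 in \<open>simp_all add: rows3_decreasing rows3_sum Tdeg_def tdeg_def tmul_def\<close>)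
qed

theorem mainTheorem6:
  shows "(\<forall>d::nat. 1 \<le> d \<and> d \<le> 6 \<longrightarrow>
            (\<forall>I. borel I \<and> saturated I \<and> hilb_poly_const I d \<longrightarrow>
                 (\<exists>le. term_order le \<and> hilb_segment_const le d I))) \<and>
         (\<forall>d::nat. 7 \<le> d \<longrightarrow>
            (\<exists>I. borel I \<and> saturated I \<and> hilb_poly_const I d \<and>
                 (\<forall>le. term_order le \<longrightarrow> \<not> hilb_segment_const le d I)))"
  using positive_part negative_part by blast

end
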